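(* There is a constant $C>0$ depending only on $n,\alpha_1,\dots,\alpha_n$ such that for all $R\ge1$, all $f\in L^2(\mathbb{R}^n)$ with $\operatorname{supp}\widehat f\subset B^n_1(0)$ (with the associated sets $X_{\lambda,\eta}$ as in the context), all dyadic $1\le\lambda\le R$ and all dyadic $\eta\ge1$, $$\phi_{X_{\lambda,\eta},n,R}\le C\,\eta^{-1}\max\{1,R^{1-2\alpha}\lambda^{\alpha-1}\}.$$
   Context: Fix $n\ge1$, $\alpha_1,\dots,\alpha_n>0$, $\alpha=\min_j\alpha_j<\tfrac12$. $e^{it\Delta}f(x)=\int_{\mathbb{R}^n}e^{2\pi i x\cdot\xi}e^{4\pi^2 i t|\xi|^2}\widehat f(\xi)\,d\xi$. For $R\ge1$, $\theta(t)=\big(R^{1-2\alpha_1}t^{\alpha_1},\dots,R^{1-2\alpha_n}t^{\alpha_n}\big)$, $0\le t\le R$. A lattice cube is a set $\prod_{i=1}^{n+1}[m_i,m_i+1)\subset\mathbb{R}^{n+1}$ with $m\in\mathbb{Z}^{n+1}$. Given $f$, for each $j\in\mathbb{Z}^n$ with $|j|\le R$ choose $t_j\in[1,R]$ with $\sup_{1<t<R}|e^{it\Delta}f(j+\theta(t))|\le 2|e^{it_j\Delta}f(j+\theta(t_j))|$, and let $\widetilde Q_j$ be the lattice cube containing $(j+\theta(t_j),t_j)$. Set $X=(B^n_R(0)\times[1,R])\cap\bigcup_{|j|\le R}\widetilde Q_j$, and for dyadic $1\le\lambda\le R$, $X_\lambda=X\cap(\mathbb{R}^n\times[\lambda,2\lambda])$.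 For dyadic $\eta\ge1$, $\mathcal F_\eta$ is the collection of lattice cubes $\widetilde Q$ with $\eta\le\#\{y\in B^n_R(0)\cap\mathbb{Z}^n:\widetilde Q=\widetilde Q_y\}<2\eta$, and $X_{\lambda,\eta}=X_\lambda\cap\bigcup_{\widetilde Q\in\mathcal F_\eta}\widetilde Q$. For a union $Y$ of lattice cubes, $1\le\beta\le n+1$ and $R\ge1$, the density is $$\phi_{Y,\beta,R}=\sup\Big\{\frac{\#\{\widetilde Q\subset Y\text{ lattice cube}:\widetilde Q\subset B^{n+1}_r(x',t')\}}{r^\beta}:\ (x',t')\in\mathbb{R}^{n+1},\ r\ge1,\ B^{n+1}_r(x',t')\subset B^{n+1}_R(0)\Big\},$$ where $B^{n+1}_r(x',t')$ is the Euclidean ball in $\mathbb{R}^{n+1}$ of radius $r$ centered at $(x',t')$. *)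

theory Defs
  imports "HOL-Analysis.Analysis"
begin

text \<open>Points of R^(n+1) are represented as pairs (x,t) with x in R^n (type real^'n) and t real;
  the norm on the product type is the Euclidean one.\<close>

text \<open>Schroedinger evolution, expressed through g = the Fourier transform of f.\<close>
definition schr :: "(real^'n \<Rightarrow> complex) \<Rightarrow> real \<Rightarrow> real^'n \<Rightarrow> complex" where
  "schr g t x = (LINT \<xi>|lebesgue.
      exp (\<i> * complex_of_real (2 * pi * (x \<bullet> \<xi>))) *
      exp (\<i> * complex_of_real (4 * pi^2 * t * (norm \<xi>)^2)) * g \<xi>)"

definition theta :: "('n \<Rightarrow> real) \<Rightarrow> real \<Rightarrow> real \<Rightarrow> real^'n" where
  "theta a R t = (\<chi> i. R powr (1 - 2 * a i) * t powr (a i))"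

definition lattice_cube :: "(int^'n) \<times> int \<Rightarrow> ((real^'n) \<times> real) set" where
  "lattice_cube m = {p. (\<forall>i. real_of_int (fst m $ i) \<le> fst p $ i \<and> fst p $ i < real_of_int (fst m $ i) + 1)
      \<and> real_of_int (snd m) \<le> snd p \<and> snd p < real_of_int (snd m) + 1}"

definition lattice_cubes :: "((real^'n) \<times> real) set set" where
  "lattice_cubes = range lattice_cube"

definition cube_of :: "(real^'n) \<times> real \<Rightarrow> ((real^'n) \<times> real) set" where
  "cube_of p = lattice_cube (\<chi> i. \<lfloor>fst p $ i\<rfloor>, \<lfloor>snd p\<rfloor>)"

definition ivec :: "int^'n \<Rightarrow> real^'n" where
  "ivec j = (\<chi> i. real_of_int (j $ i))"

definition good_choice :: "('n \<Rightarrow> real) \<Rightarrow> real \<Rightarrow> (real^'n \<Rightarrow> complex) \<Rightarrow> (int^'n \<Rightarrow> real) \<Rightarrow> bool" where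
  "good_choice a R g tc = (\<forall>j. norm (ivec j) \<le> R \<longrightarrow>
      tc j \<in> {1..R} \<and>
      (\<forall>t\<in>{1<..<R}. norm (schr g t (ivec j + theta a R t))
          \<le> 2 * norm (schr g (tc j) (ivec j + theta a R (tc j)))))"

definition Qt :: "('n \<Rightarrow> real) \<Rightarrow> real \<Rightarrow> (int^'n \<Rightarrow> real) \<Rightarrow> int^'n \<Rightarrow> ((real^'n) \<times> real) set" where
  "Qt a R tc j = cube_of (ivec j + theta a R (tc j), tc j)"

definition Xset :: "('n \<Rightarrow> real) \<Rightarrow> real \<Rightarrow> (int^'n \<Rightarrow> real) \<Rightarrow> ((real^'n) \<times> real) set" where
  "Xset a R tc = (ball 0 R \<times> {1..R}) \<inter> (\<Union>j\<in>{j. norm (ivec j) \<le> R}. Qt a R tc j)"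

definition Xlam :: "('n \<Rightarrow> real) \<Rightarrow> real \<Rightarrow> (int^'n \<Rightarrow> real) \<Rightarrow> real \<Rightarrow> ((real^'n) \<times> real) set" where
  "Xlam a R tc lam = Xset a R tc \<inter> (UNIV \<times> {lam..2*lam})"

definition Fam :: "('n \<Rightarrow> real) \<Rightarrow> real \<Rightarrow> (int^'n \<Rightarrow> real) \<Rightarrow> real \<Rightarrow> ((real^'n) \<times> real) set set" where
  "Fam a R tc eta = {Q \<in> lattice_cubes.
      eta \<le> real (card {y. norm (ivec y) < R \<and> Q = Qt a R tc y}) \<and>
      real (card {y. norm (ivec y) < R \<and> Q = Qt a R tc y}) < 2 * eta}"

definition Xlameta :: "('n \<Rightarrow> real) \<Rightarrow> real \<Rightarrow> (int^'n \<Rightarrow> real) \<Rightarrow> real \<Rightarrow> real \<Rightarrow> ((real^'n) \<times> real) set" where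
  "Xlameta a R tc lam eta = Xlam a R tc lam \<inter> \<Union>(Fam a R tc eta)"

definition density :: "((real^'n) \<times> real) set \<Rightarrow> real \<Rightarrow> real \<Rightarrow> real" where
  "density Y \<beta> R = Sup {real (card {Q \<in> lattice_cubes. Q \<subseteq> Y \<and> Q \<subseteq> ball c r}) / r powr \<beta> | c r.
      r \<ge> 1 \<and> ball c r \<subseteq> ball 0 R}"

end

theory Submission
  imports Defs
begin

(* Each cube of X_{lam,eta} is the cube Q_y of at least eta lattice points y, and distinct
   cubes have disjoint sets of such y. So eta times the number of cubes of X_{lam,eta} inside
   a ball B_r is at most the number of y whose point P_y = (y + theta(t_y), t_y) lies in B_r
   with t_y in [lam, 2 lam]. On [lam, 2 lam] every component of theta is Lipschitz with
   constant K M, where K = sum_i alpha_i 2^alpha_i and M = max {1, R^(1-2 alpha) lam^(alpha-1)}.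
   Cutting the time range of B_r into about 2 K M slabs of length r / (K M), theta moves by
   less than r within a slab, so the y of one slab lie in a lattice box of side 4 r. This gives
   at most (2 K M + 1) (4 r + 1)^n, i.e. O(M r^n), points. *)

lemma lattice_cube_index:
  assumes "p \<in> lattice_cube m"
  shows "m = ((\<chi> i. \<lfloor>fst p $ i\<rfloor>), \<lfloor>snd p\<rfloor>)"
proof -
  have "fst m = (\<chi> i. \<lfloor>fst p $ i\<rfloor>)"
    using assms by (auto simp: vec_eq_iff lattice_cube_def intro!: floor_unique[symmetric])
  moreover have "snd m = \<lfloor>snd p\<rfloor>"
    using assms by (auto simp: lattice_cube_def intro!: floor_unique[symmetric])
  ultimately show ?thesis
    by (metis prod.collapse)
qed

lemma in_cube_of: "p \<in> cube_of p"
  unfolding cube_of_def lattice_cube_def by auto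

lemma corner_in_lattice_cube: "(ivec (fst m), real_of_int (snd m)) \<in> lattice_cube m"
  unfolding lattice_cube_def ivec_def by auto

lemma lattice_cube_subset_Union_imp_mem:
  assumes "Q \<in> lattice_cubes" "\<F> \<subseteq> lattice_cubes" "Q \<subseteq> \<Union>\<F>"
  shows "Q \<in> \<F>"
proof -
  obtain m where m: "Q = lattice_cube m"
    using assms(1) unfolding lattice_cubes_def by auto
  then obtain Q' where "Q' \<in> \<F>" "(ivec (fst m), real_of_int (snd m)) \<in> Q'"
    using assms(3) corner_in_lattice_cube by blast
  moreover from this obtain m' where "Q' = lattice_cube m'"
    using assms(2) unfolding lattice_cubes_def by auto
  ultimately show ?thesis
    using m lattice_cube_index corner_in_lattice_cube by metis
qed

lemma card_int_interval_le:
  fixes x \<rho> :: real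
  assumes "\<rho> \<ge> 0"
  shows "finite {k::int. \<bar>of_int k - x\<bar> < \<rho>}" "real (card {k::int. \<bar>of_int k - x\<bar> < \<rho>}) \<le> 2 * \<rho> + 1"
proof -
  have sub: "{k::int. \<bar>of_int k - x\<bar> < \<rho>} \<subseteq> {\<lceil>x - \<rho>\<rceil>..\<lfloor>x + \<rho>\<rfloor>}"
    by (auto simp: abs_less_iff ceiling_le_iff le_floor_iff)
  then show "finite {k::int. \<bar>of_int k - x\<bar> < \<rho>}"
    using finite_subset by blast
  have "real (card {\<lceil>x - \<rho>\<rceil>..\<lfloor>x + \<rho>\<rfloor>}) \<le> 2 * \<rho> + 1"
  proof (cases "\<lceil>x - \<rho>\<rceil> \<le> \<lfloor>x + \<rho>\<rfloor>")
    case True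
    then show ?thesis
      using of_int_floor_le[of "x + \<rho>"] le_of_int_ceiling[of "x - \<rho>"] by simp linarith
  qed (use assms in simp)
  then show "real (card {k::int. \<bar>of_int k - x\<bar> < \<rho>}) \<le> 2 * \<rho> + 1"
    using card_mono[OF _ sub] by (meson finite_atLeastAtMost_int of_nat_mono order.trans)
qed

lemma card_int_box_le:
  fixes w :: "real^'n::finite" and \<rho> :: real
  assumes "\<rho> \<ge> 0"
  defines "B \<equiv> {z::int^'n. \<forall>i. \<bar>of_int (z $ i) - w $ i\<bar> < \<rho>}"
  shows "finite B" "real (card B) \<le> (2 * \<rho> + 1) ^ CARD('n)"
proof -
  define A where "A i = {k::int. \<bar>of_int k - w $ i\<bar> < \<rho>}" for i
  have B_eq: "B = vec_lambda ` (PiE UNIV A)"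
  proof (intro set_eqI iffI)
    fix z assume "z \<in> B"
    then have "vec_nth z \<in> PiE UNIV A"
      by (auto simp: A_def B_def PiE_UNIV_domain)
    then show "z \<in> vec_lambda ` (PiE UNIV A)"
      by (metis image_eqI vec_nth_inverse)
  qed (auto simp: A_def B_def PiE_UNIV_domain)
  have inj: "inj_on vec_lambda (PiE UNIV A)"
    by (auto simp: inj_on_def)
  show "finite B"
    using card_int_interval_le(1)[OF assms(1)] by (simp add: B_eq A_def finite_PiE)
  have "real (card B) = (\<Prod>i\<in>UNIV. real (card (A i)))"
    using card_image[OF inj] card_PiE[of UNIV A] by (simp add: B_eq)
  also have "\<dots> \<le> (\<Prod>i\<in>(UNIV::'n set). 2 * \<rho> + 1)"
    by (rule prod_mono) (use card_int_interval_le[OF assms(1)] A_def in auto)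
  finally show "real (card B) \<le> (2 * \<rho> + 1) ^ CARD('n)"
    by simp
qed

lemma card_le_by_fibres:
  fixes k :: "'a \<Rightarrow> 'b" and B :: real
  assumes "finite K" "k ` W \<subseteq> K"
    and "\<And>j. j \<in> K \<Longrightarrow> finite {y \<in> W. k y = j}"
    and "\<And>j. j \<in> K \<Longrightarrow> real (card {y \<in> W. k y = j}) \<le> B"
  shows "finite W" "real (card W) \<le> real (card K) * B"
proof -
  have W_eq: "W = (\<Union>j\<in>K. {y \<in> W. k y = j})"
    using assms(2) by auto
  moreover have "finite (\<Union>j\<in>K. {y \<in> W. k y = j})"
    using assms(1,3) by blast
  ultimately show "finite W"
    by metis
  have "card W \<le> (\<Sum>j\<in>K. card {y \<in> W. k y = j})"
    by (subst W_eq) (rule card_UN_le[OF assms(1)])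
  then have "real (card W) \<le> (\<Sum>j\<in>K. real (card {y \<in> W. k y = j}))"
    by (simp flip: of_nat_sum)
  also have "\<dots> \<le> real (card K) * B"
    using sum_mono[of K _ "\<lambda>_. B"] assms(4) by simp
  finally show "real (card W) \<le> real (card K) * B" .
qed

definition dyadic_speed :: "('n::finite \<Rightarrow> real) \<Rightarrow> real \<Rightarrow> real \<Rightarrow> real" where
  "dyadic_speed a R lam = max 1 (R powr (1 - 2 * Min (range a)) * lam powr (Min (range a) - 1))"

lemma powr_le_on_dyadic_interval:
  fixes a lam \<xi> :: real
  assumes "lam > 0" "\<xi> \<in> {lam..2 * lam}" "a > 0"
  shows "\<xi> powr (a - 1) \<le> 2 powr a * lam powr (a - 1)"
proof (cases "a \<ge> 1")
  case True
  have "\<xi> powr (a - 1) \<le> (2 * lam) powr (a - 1)"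
    using assms True by (intro powr_mono2) auto
  also have "\<dots> = 2 powr (a - 1) * lam powr (a - 1)"
    using assms by (simp add: powr_mult)
  also have "\<dots> \<le> 2 powr a * lam powr (a - 1)"
    by (intro mult_right_mono) auto
  finally show ?thesis .
next
  case False
  have "\<xi> powr (a - 1) \<le> lam powr (a - 1)"
    using assms False by (intro powr_mono2') auto
  also have "\<dots> \<le> 2 powr a * lam powr (a - 1)"
  proof -
    have "1 \<le> 2 powr a"
      using assms by (intro ge_one_powr_ge_zero) auto
    then show ?thesis
      using mult_right_mono[of 1 "2 powr a" "lam powr (a - 1)"] by simp
  qed
  finally show ?thesis .
qed

lemma powr_Lipschitz_on_dyadic_interval:
  fixes a lam u v :: real
  assumes "lam > 0" "u \<in> {lam..2 * lam}" "v \<in> {lam..2 * lam}" "a > 0"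
  shows "\<bar>v powr a - u powr a\<bar> \<le> a * 2 powr a * lam powr (a - 1) * \<bar>v - u\<bar>"
proof -
  have ordered: "\<bar>v powr a - u powr a\<bar> \<le> a * 2 powr a * lam powr (a - 1) * \<bar>v - u\<bar>"
    if "u < v" "u \<in> {lam..2 * lam}" "v \<in> {lam..2 * lam}" for u v
  proof -
    have "\<exists>z>u. z < v \<and> v powr a - u powr a = (v - u) * (a * z powr (a - 1))"
      by (rule MVT2[OF \<open>u < v\<close>]) (use that assms(1) in \<open>auto intro!: has_real_derivative_powr\<close>)
    then obtain z where z: "u < z" "z < v" "v powr a - u powr a = (v - u) * (a * z powr (a - 1))"
      by blast
    have "z powr (a - 1) \<le> 2 powr a * lam powr (a - 1)"
      using z that assms by (intro powr_le_on_dyadic_interval) auto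
    then have "(v - u) * (a * z powr (a - 1)) \<le> (v - u) * (a * (2 powr a * lam powr (a - 1)))"
      using z assms by (intro mult_left_mono) auto
    moreover have "0 \<le> (v - u) * (a * z powr (a - 1))"
      using z assms by simp
    ultimately show ?thesis
      using z by (simp add: algebra_simps)
  qed
  show ?thesis
    using ordered[of u v] ordered[of v u] assms
    by (cases u v rule: linorder_cases) (auto simp: abs_minus_commute)
qed

lemma scale_factor_antimono_exponent:
  fixes a b lam R :: real
  assumes "1 \<le> lam" "lam \<le> R" "b \<le> a"
  shows "R powr (1 - 2 * a) * lam powr (a - 1) \<le> R powr (1 - 2 * b) * lam powr (b - 1)"
proof -
  have "ln lam \<le> ln R" "0 \<le> ln R"
    using assms by auto
  then have "(a - b) * (ln lam - 2 * ln R) \<le> 0"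
    using assms by (intro mult_nonneg_nonpos) linarith+
  then have "(1 - 2 * a) * ln R + (a - 1) * ln lam \<le> (1 - 2 * b) * ln R + (b - 1) * ln lam"
    by (simp add: algebra_simps)
  then show ?thesis
    using assms by (simp add: powr_def flip: exp_add)
qed

lemma theta_Lipschitz_on_dyadic_interval:
  fixes a :: "'n::finite \<Rightarrow> real"
  assumes "\<forall>i. a i > 0" "1 \<le> lam" "lam \<le> R" "t \<in> {lam..2 * lam}" "t' \<in> {lam..2 * lam}"
  shows "\<bar>theta a R t $ i - theta a R t' $ i\<bar>
    \<le> (\<Sum>j\<in>UNIV. a j * 2 powr a j) * dyadic_speed a R lam * \<bar>t - t'\<bar>"
proof -
  let ?\<alpha> = "Min (range a)"
  have "\<bar>theta a R t $ i - theta a R t' $ i\<bar> = R powr (1 - 2 * a i) * \<bar>t powr a i - t' powr a i\<bar>"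
    by (simp add: theta_def abs_mult flip: right_diff_distrib)
  also have "\<dots> \<le> R powr (1 - 2 * a i) * (a i * 2 powr a i * lam powr (a i - 1) * \<bar>t - t'\<bar>)"
    using assms by (intro mult_left_mono powr_Lipschitz_on_dyadic_interval) auto
  also have "\<dots> = a i * 2 powr a i * \<bar>t - t'\<bar> * (R powr (1 - 2 * a i) * lam powr (a i - 1))"
    by (simp add: algebra_simps)
  also have "\<dots> \<le> a i * 2 powr a i * \<bar>t - t'\<bar> * (R powr (1 - 2 * ?\<alpha>) * lam powr (?\<alpha> - 1))"
    using assms by (intro mult_left_mono scale_factor_antimono_exponent) (auto simp: less_imp_le)
  also have "\<dots> \<le> (\<Sum>j\<in>UNIV. a j * 2 powr a j) * dyadic_speed a R lam * \<bar>t - t'\<bar>"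
  proof -
    have "a i * 2 powr a i \<le> (\<Sum>j\<in>UNIV. a j * 2 powr a j)"
      using assms(1) by (intro member_le_sum) (auto intro: less_imp_le)
    then have "a i * 2 powr a i * (R powr (1 - 2 * ?\<alpha>) * lam powr (?\<alpha> - 1))
        \<le> (\<Sum>j\<in>UNIV. a j * 2 powr a j) * dyadic_speed a R lam"
      using assms(1) by (intro mult_mono) (auto simp: dyadic_speed_def intro!: sum_nonneg intro: less_imp_le)
    from mult_right_mono[OF this abs_ge_zero[of "t - t'"]] show ?thesis
      by (simp add: mult_ac)
  qed
  finally show ?thesis .
qed

lemma mem_ball_prod_components:
  fixes c :: "(real^'n) \<times> real"
  assumes "(x, t) \<in> ball c r"
  shows "\<bar>t - snd c\<bar> < r" "\<bar>x $ i - fst c $ i\<bar> < r"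
proof -
  show "\<bar>t - snd c\<bar> < r"
    using assms dist_snd_le[of c "(x, t)"] by (simp add: dist_real_def abs_minus_commute)
  have "norm (x - fst c) < r"
    using assms dist_fst_le[of c "(x, t)"] by (simp add: dist_norm norm_minus_commute)
  then show "\<bar>x $ i - fst c $ i\<bar> < r"
    using component_le_norm_cart[of "x - fst c" i] by simp
qed

lemma floor_divide_eq_imp_dist_less:
  fixes u v b s :: real
  assumes "\<lfloor>(u - b) / s\<rfloor> = \<lfloor>(v - b) / s\<rfloor>" "s > 0"
  shows "\<bar>u - v\<bar> < s"
proof -
  have "\<bar>(u - b) / s - (v - b) / s\<bar> < 1"
    using assms(1) by (rule floor_eq_imp_diff_1)
  then show ?thesis
    using assms(2) by (simp add: abs_divide flip: diff_divide_distrib)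
qed

lemma floor_divide_mem_range:
  fixes t t0 r s :: real
  assumes "\<bar>t - t0\<bar> < r" "s > 0"
  shows "\<lfloor>(t - (t0 - r)) / s\<rfloor> \<in> {0..\<lfloor>2 * r / s\<rfloor>}"
proof -
  have "0 \<le> (t - (t0 - r)) / s" "(t - (t0 - r)) / s \<le> 2 * r / s"
    using assms by (auto intro: divide_right_mono)
  then show ?thesis
    by (auto simp: floor_mono)
qed

lemma lattice_point_in_box_if_close_in_time:
  fixes \<theta> :: "real \<Rightarrow> real^'n::finite" and c :: "(real^'n) \<times> real"
  assumes lip: "\<And>t t' i. t \<in> T \<Longrightarrow> t' \<in> T \<Longrightarrow> \<bar>\<theta> t $ i - \<theta> t' $ i\<bar> \<le> L * \<bar>t - t'\<bar>"
    and "t \<in> T" "t0 \<in> T" "L * \<bar>t - t0\<bar> < r" "(ivec y + \<theta> t, t) \<in> ball c r"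
  shows "\<bar>of_int (y $ i) - (fst c - \<theta> t0) $ i\<bar> < 2 * r"
proof -
  have "\<bar>\<theta> t $ i - \<theta> t0 $ i\<bar> < r"
    using lip[OF assms(2,3)] assms(4) by (rule le_less_trans)
  moreover have "\<bar>ivec y $ i + \<theta> t $ i - fst c $ i\<bar> < r"
    using mem_ball_prod_components(2)[OF assms(5)] by simp
  ultimately show ?thesis
    by (simp add: ivec_def abs_less_iff)
qed

lemma card_trajectory_hits_ball_le:
  fixes \<theta> :: "real \<Rightarrow> real^'n::finite" and tc :: "int^'n \<Rightarrow> real" and c :: "(real^'n) \<times> real"
  assumes lip: "\<And>t t' i. t \<in> T \<Longrightarrow> t' \<in> T \<Longrightarrow> \<bar>\<theta> t $ i - \<theta> t' $ i\<bar> \<le> L * \<bar>t - t'\<bar>"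
    and "L > 0" "r > 0"
  defines "W \<equiv> {y. tc y \<in> T \<and> (ivec y + \<theta> (tc y), tc y) \<in> ball c r}"
  shows "finite W" "real (card W) \<le> (2 * L + 1) * (4 * r + 1) ^ CARD('n)"
proof -
  define s where "s = r / L"
  have "s > 0"
    using assms by (simp add: s_def)
  define slab where "slab y = \<lfloor>(tc y - (snd c - r)) / s\<rfloor>" for y
  define box where "box w = {z::int^'n. \<forall>i. \<bar>of_int (z $ i) - w $ i\<bar> < 2 * r}" for w
  have "2 * r / s = 2 * L"
    using assms by (simp add: s_def)
  then have "slab y \<in> {0..\<lfloor>2 * L\<rfloor>}" if "y \<in> W" for y
    using that mem_ball_prod_components(1)[where x = "ivec y + \<theta> (tc y)" and t = "tc y"]
      floor_divide_mem_range[of "tc y" "snd c" r s] \<open>s > 0\<close>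
    by (simp add: W_def slab_def)
  then have slab_range: "slab ` W \<subseteq> {0..\<lfloor>2 * L\<rfloor>}"
    by blast
  have fibre_in_box: "\<exists>w. {y \<in> W. slab y = j} \<subseteq> box w" for j
  proof (cases "{y \<in> W. slab y = j} = {}")
    case False
    then obtain y0 where y0: "y0 \<in> W" "slab y0 = j"
      by auto
    have "y \<in> box (fst c - \<theta> (tc y0))" if "y \<in> W" "slab y = j" for y
    proof -
      have "\<bar>tc y - tc y0\<bar> < s"
        using that y0 \<open>s > 0\<close> floor_divide_eq_imp_dist_less[of "tc y" "snd c - r" s "tc y0"]
        by (simp add: slab_def)
      then have "L * \<bar>tc y - tc y0\<bar> < r"
        using assms by (simp add: s_def pos_less_divide_eq mult.commute)
      moreover have "tc y \<in> T" "tc y0 \<in> T" "(ivec y + \<theta> (tc y), tc y) \<in> ball c r"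
        using that(1) y0(1) by (simp_all add: W_def)
      ultimately show ?thesis
        using lattice_point_in_box_if_close_in_time[where T = T, OF lip] by (simp add: box_def)
    qed
    then show ?thesis
      by blast
  qed auto
  have box_facts: "finite (box w)" "real (card (box w)) \<le> (4 * r + 1) ^ CARD('n)" for w
    using card_int_box_le[of "2 * r" w] assms by (simp_all add: box_def)
  have fibre_finite: "finite {y \<in> W. slab y = j}" for j
    using fibre_in_box[of j] box_facts(1) finite_subset by blast
  have fibre_card: "real (card {y \<in> W. slab y = j}) \<le> (4 * r + 1) ^ CARD('n)" for j
    using fibre_in_box[of j] box_facts by (meson card_mono of_nat_mono order_trans)
  show "finite W"
    using card_le_by_fibres(1)[OF _ slab_range fibre_finite fibre_card] by simp
  have "real (card W) \<le> real (card {0..\<lfloor>2 * L\<rfloor>}) * (4 * r + 1) ^ CARD('n)"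
    using card_le_by_fibres(2)[OF _ slab_range fibre_finite fibre_card] by simp
  also have "\<dots> \<le> (2 * L + 1) * (4 * r + 1) ^ CARD('n)"
    using assms by (intro mult_right_mono) auto
  finally show "real (card W) \<le> (2 * L + 1) * (4 * r + 1) ^ CARD('n)" .
qed

lemma card_fibres_ge_imp_mult_card_le:
  fixes f :: "'a \<Rightarrow> 'b" and eta :: real
  assumes "finite V" "eta > 0" "\<And>Q. Q \<in> S \<Longrightarrow> eta \<le> real (card {y \<in> V. f y = Q})"
  shows "eta * real (card S) \<le> real (card V)"
proof -
  have "S \<subseteq> f ` V"
  proof
    fix Q assume "Q \<in> S"
    then have "eta \<le> real (card {y \<in> V. f y = Q})"
      by (rule assms(3))
    then have "{y \<in> V. f y = Q} \<noteq> {}"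
      using assms(2) by (metis card.empty not_le of_nat_0)
    then show "Q \<in> f ` V"
      by blast
  qed
  then have "finite S"
    using assms(1) finite_surj by blast
  have "eta * real (card S) \<le> (\<Sum>Q\<in>S. real (card {y \<in> V. f y = Q}))"
    using sum_mono[of S "\<lambda>_. eta"] assms(3) by (simp add: mult.commute)
  also have "\<dots> = real (card (\<Union>Q\<in>S. {y \<in> V. f y = Q}))"
  proof -
    have "\<forall>Q\<in>S. finite {y \<in> V. f y = Q}"
      using assms(1) by auto
    moreover have "\<forall>Q\<in>S. \<forall>Q'\<in>S. Q \<noteq> Q' \<longrightarrow> {y \<in> V. f y = Q} \<inter> {y \<in> V. f y = Q'} = {}"
      by auto
    ultimately show ?thesis
      by (simp add: card_UN_disjoint[OF \<open>finite S\<close>])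
  qed
  also have "\<dots> \<le> real (card V)"
    using assms(1) by (intro of_nat_mono card_mono) auto
  finally show ?thesis .
qed

lemma card_Qt_preimages_ge:
  assumes "Q \<in> lattice_cubes" "Q \<subseteq> Xlameta a R tc lam eta"
  shows "eta \<le> real (card {y. norm (ivec y) < R \<and> Q = Qt a R tc y})"
proof -
  have "Q \<subseteq> \<Union>(Fam a R tc eta)"
    using assms(2) by (simp add: Xlameta_def)
  moreover have "Fam a R tc eta \<subseteq> lattice_cubes"
    by (auto simp: Fam_def)
  ultimately have "Q \<in> Fam a R tc eta"
    using lattice_cube_subset_Union_imp_mem assms(1) by blast
  then show ?thesis
    by (simp add: Fam_def)
qed

lemma card_cubes_Xlameta_le:
  fixes a :: "'n::finite \<Rightarrow> real" and tc :: "int^'n \<Rightarrow> real" and c :: "(real^'n) \<times> real"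
    and R lam eta r :: real
  assumes "eta > 0"
  defines "V \<equiv> {y. tc y \<in> {lam..2 * lam} \<and> (ivec y + theta a R (tc y), tc y) \<in> ball c r}"
  assumes "finite V"
  shows "eta * real (card {Q \<in> lattice_cubes. Q \<subseteq> Xlameta a R tc lam eta \<and> Q \<subseteq> ball c r})
    \<le> real (card V)"
proof (rule card_fibres_ge_imp_mult_card_le[OF \<open>finite V\<close> \<open>eta > 0\<close>])
  fix Q assume Q: "Q \<in> {Q \<in> lattice_cubes. Q \<subseteq> Xlameta a R tc lam eta \<and> Q \<subseteq> ball c r}"
  define Y where "Y = {y. norm (ivec y) < R \<and> Q = Qt a R tc y}"
  have "Y \<subseteq> {y \<in> V. Qt a R tc y = Q}"
  proof
    fix y assume "y \<in> Y"
    then have "(ivec y + theta a R (tc y), tc y) \<in> Q"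
      using in_cube_of by (auto simp: Y_def Qt_def)
    moreover have "Q \<subseteq> ball c r" "Q \<subseteq> UNIV \<times> {lam..2 * lam}"
      using Q by (auto simp: Xlameta_def Xlam_def)
    ultimately show "y \<in> {y \<in> V. Qt a R tc y = Q}"
      using \<open>y \<in> Y\<close> by (auto simp: V_def Y_def)
  qed
  then have "card Y \<le> card {y \<in> V. Qt a R tc y = Q}"
    using \<open>finite V\<close> by (intro card_mono) auto
  moreover have "eta \<le> real (card Y)"
    using Q card_Qt_preimages_ge[of Q a R tc lam eta] by (simp add: Y_def)
  ultimately show "eta \<le> real (card {y \<in> V. Qt a R tc y = Q})"
    by linarith
qed

lemma density_le:
  assumes "R \<ge> 1"
    and "\<And>c r. r \<ge> 1 \<Longrightarrow> ball c r \<subseteq> ball 0 R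
      \<Longrightarrow> real (card {Q \<in> lattice_cubes. Q \<subseteq> Y \<and> Q \<subseteq> ball c r}) \<le> B * r powr \<beta>"
  shows "density Y \<beta> R \<le> B"
  unfolding density_def
proof (rule cSup_least)
  have "ball 0 1 \<subseteq> ball 0 R"
    using assms(1) by (rule subset_ball)
  then show "{real (card {Q \<in> lattice_cubes. Q \<subseteq> Y \<and> Q \<subseteq> ball c r}) / r powr \<beta> | c r.
      r \<ge> 1 \<and> ball c r \<subseteq> ball 0 R} \<noteq> {}"
    by blast
next
  fix x
  assume "x \<in> {real (card {Q \<in> lattice_cubes. Q \<subseteq> Y \<and> Q \<subseteq> ball c r}) / r powr \<beta> | c r.
      r \<ge> 1 \<and> ball c r \<subseteq> ball 0 R}"
  then obtain c r where "x = real (card {Q \<in> lattice_cubes. Q \<subseteq> Y \<and> Q \<subseteq> ball c r}) / r powr \<beta>"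
    and "r \<ge> 1" "ball c r \<subseteq> ball 0 R"
    by blast
  moreover have "real (card {Q \<in> lattice_cubes. Q \<subseteq> Y \<and> Q \<subseteq> ball c r}) \<le> B * r powr \<beta>"
    using assms(2) \<open>r \<ge> 1\<close> \<open>ball c r \<subseteq> ball 0 R\<close> .
  ultimately show "x \<le> B"
    by (simp add: pos_divide_le_eq)
qed

lemma card_cubes_Xlameta_in_ball_le:
  fixes a :: "'n::finite \<Rightarrow> real" and tc :: "int^'n \<Rightarrow> real" and c :: "(real^'n) \<times> real"
  assumes "\<forall>i. a i > 0" "1 \<le> lam" "lam \<le> R" "eta > 0" "r \<ge> 1"
  shows "real (card {Q \<in> lattice_cubes. Q \<subseteq> Xlameta a R tc lam eta \<and> Q \<subseteq> ball c r})
    \<le> (2 * (\<Sum>j\<in>UNIV. a j * 2 powr a j) + 1) * 5 ^ CARD('n) * (1 / eta)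
       * dyadic_speed a R lam * r powr CARD('n)"
proof -
  define K where "K = (\<Sum>j\<in>UNIV. a j * 2 powr a j)"
  define M where "M = dyadic_speed a R lam"
  define V where "V = {y. tc y \<in> {lam..2 * lam} \<and> (ivec y + theta a R (tc y), tc y) \<in> ball c r}"
  have "K > 0"
    using assms(1) by (simp add: K_def sum_pos)
  have "M \<ge> 1"
    by (simp add: M_def dyadic_speed_def)
  have lip: "\<bar>theta a R t $ i - theta a R t' $ i\<bar> \<le> (K * M) * \<bar>t - t'\<bar>"
    if "t \<in> {lam..2 * lam}" "t' \<in> {lam..2 * lam}" for t t' i
    using theta_Lipschitz_on_dyadic_interval[OF assms(1-3) that] by (simp add: K_def M_def)
  have "K * M > 0"
    using \<open>K > 0\<close> \<open>M \<ge> 1\<close> by simp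
  have "finite V" "real (card V) \<le> (2 * (K * M) + 1) * (4 * r + 1) ^ CARD('n)"
    using card_trajectory_hits_ball_le[where T = "{lam..2 * lam}" and tc = tc and c = c and r = r,
        OF lip \<open>K * M > 0\<close>] assms(5)
    by (simp_all add: V_def)
  moreover have "eta * real (card {Q \<in> lattice_cubes. Q \<subseteq> Xlameta a R tc lam eta \<and> Q \<subseteq> ball c r})
      \<le> real (card V)"
    using card_cubes_Xlameta_le[OF assms(4)] \<open>finite V\<close> by (simp add: V_def)
  moreover have "(2 * (K * M) + 1) * (4 * r + 1) ^ CARD('n) \<le> ((2 * K + 1) * M) * (5 * r) ^ CARD('n)"
    using \<open>K > 0\<close> \<open>M \<ge> 1\<close> assms(5) by (intro mult_mono power_mono) (auto simp: algebra_simps)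
  ultimately show ?thesis
    using assms(4,5)
    by (simp add: K_def M_def powr_realpow power_mult_distrib pos_le_divide_eq field_simps)
qed

theorem lemma3p7:
  fixes a :: "'n::finite \<Rightarrow> real"
  assumes "\<forall>i. a i > 0" and "Min (range a) < 1/2"
  shows "\<exists>C>0. \<forall>(R::real) (g::real^'n \<Rightarrow> complex) (tc::int^'n \<Rightarrow> real) (lam::real) (eta::real).
    R \<ge> 1 \<longrightarrow>
    g \<in> borel_measurable lebesgue \<longrightarrow>
    integrable lebesgue (\<lambda>\<xi>. (norm (g \<xi>))^2) \<longrightarrow>
    (\<forall>\<xi>. \<xi> \<notin> ball 0 1 \<longrightarrow> g \<xi> = 0) \<longrightarrow>
    good_choice a R g tc \<longrightarrow>
    (\<exists>k::nat. lam = 2^k) \<longrightarrow> 1 \<le> lam \<longrightarrow> lam \<le> R \<longrightarrow>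
    (\<exists>k::nat. eta = 2^k) \<longrightarrow>
    density (Xlameta a R tc lam eta) (real CARD('n)) R
      \<le> C * (1 / eta) * max 1 (R powr (1 - 2 * Min (range a)) * lam powr (Min (range a) - 1))"
proof -
  define C where "C = (2 * (\<Sum>j\<in>UNIV. a j * 2 powr a j) + 1) * 5 ^ CARD('n)"
  have "C > 0"
    using assms(1) by (simp add: C_def sum_nonneg less_imp_le add_nonneg_pos)
  moreover have "density (Xlameta a R tc lam eta) (real CARD('n)) R \<le> C * (1 / eta) * dyadic_speed a R lam"
    if "R \<ge> 1" "1 \<le> lam" "lam \<le> R" "\<exists>k::nat. eta = 2 ^ k" for R tc lam eta
  proof (rule density_le)
    have "eta > 0"
      using that(4) by auto
    then show "real (card {Q \<in> lattice_cubes. Q \<subseteq> Xlameta a R tc lam eta \<and> Q \<subseteq> ball c r})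
        \<le> C * (1 / eta) * dyadic_speed a R lam * r powr real CARD('n)" if "r \<ge> 1" for c r
      using card_cubes_Xlameta_in_ball_le[OF assms(1) \<open>1 \<le> lam\<close> \<open>lam \<le> R\<close> _ that] by (simp add: C_def)
  qed (use that in simp)
  ultimately show ?thesis
    unfolding dyadic_speed_def by blast
qed

end
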